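(* For every $k\ge 0$ and every opponent agent $\mathrm{opp}$, $\mathrm{outcome}(\mathrm{CIMCIC}(k),\mathrm{opp})$ is never $(C,D)$.
   Context: An agent is a deterministic program that takes the source code of an opponent agent and outputs $C$ or $D$; $\mathrm{outcome}(A,B)=(A(\text{source of }B),B(\text{source of }A))$. Agents use a fixed sound formal proof system $S$. $\mathrm{proof\_search}(k,\mathrm{opp},\varphi)$ returns True iff some string of at most $k$ characters is a valid $S$-proof of $\varphi$. $\mathrm{CIMCIC}(k)$ ("Cooperate If My Cooperation Implies Cooperation"), on input opponent source, returns $C$ if $\mathrm{proof\_search}\big(k,\mathrm{opp},\text{``}(\mathrm{CIMCIC}(k)(\mathrm{opp}.\mathrm{source})=C)\to(\mathrm{opp}(\mathrm{CIMCIC}(k).\mathrm{source})=C)\text{''}\big)$ is True, and $D$ otherwise. *)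

theory Defs
  imports Main
begin

text \<open>Actions of the one-shot Prisoner's Dilemma.\<close>
datatype action = C | D

text \<open>An agent is identified with its source; the
  behaviour of agents is given by a (deterministic, total) interpreter
  run :: source => source => action, where run A B is the action of the agent
  with source A when given the opponent source B.\<close>
type_synonym source = string
type_synonym interp = "source \<Rightarrow> source \<Rightarrow> action"

definition outcome :: "interp \<Rightarrow> source \<Rightarrow> source \<Rightarrow> action \<times> action" where
  "outcome run A B = (run A B, run B A)"

datatype fmla =
    Outputs source source action
  | Neg fmla
  | Conj fmla fmla
  | Disj fmla fmla
  | Imp fmla fmla

primrec holds :: "interp \<Rightarrow> fmla \<Rightarrow> bool" where
  "holds run (Outputs A B a) = (run A B = a)"
| "holds run (Neg \<phi>) = (\<not> holds run \<phi>)"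
| "holds run (Conj \<phi> \<psi>) = (holds run \<phi> \<and> holds run \<psi>)"
| "holds run (Disj \<phi> \<psi>) = (holds run \<phi> \<or> holds run \<psi>)"
| "holds run (Imp \<phi> \<psi>) = (holds run \<phi> \<longrightarrow> holds run \<psi>)"

text \<open>A proof system is given by its proof-checking relation: is_proof p phi
  means the string p is a valid S-proof of phi. Soundness: proved formulas hold.\<close>
definition sound :: "interp \<Rightarrow> (string \<Rightarrow> fmla \<Rightarrow> bool) \<Rightarrow> bool" where
  "sound run is_proof \<longleftrightarrow> (\<forall>p \<phi>. is_proof p \<phi> \<longrightarrow> holds run \<phi>)"

definition proof_search :: "(string \<Rightarrow> fmla \<Rightarrow> bool) \<Rightarrow> nat \<Rightarrow> fmla \<Rightarrow> bool" where
  "proof_search is_proof k \<phi> \<longleftrightarrow> (\<exists>p. length p \<le> k \<and> is_proof p \<phi>)"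

definition is_CIMCIC :: "interp \<Rightarrow> (string \<Rightarrow> fmla \<Rightarrow> bool) \<Rightarrow> (nat \<Rightarrow> source) \<Rightarrow> bool" where
  "is_CIMCIC run is_proof cimcic \<longleftrightarrow>
     (\<forall>k opp. run (cimcic k) opp =
        (if proof_search is_proof k
              (Imp (Outputs (cimcic k) opp C) (Outputs opp (cimcic k) C))
         then C else D))"

end

theory Submission
  imports Defs
begin

text \<open>If CIMCIC(k) cooperates, its proof search succeeded, so by soundness its own
  cooperation really does imply the opponent's; hence it cannot be exploited.\<close>

lemma holds_if_proof_search:
  assumes "sound run is_proof" and "proof_search is_proof k \<phi>"
  shows "holds run \<phi>"
  using assms unfolding sound_def proof_search_def by blast

lemma CIMCIC_cooperates_iff:
  assumes "is_CIMCIC run is_proof cimcic"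
  shows "run (cimcic k) opp = C \<longleftrightarrow>
    proof_search is_proof k (Imp (Outputs (cimcic k) opp C) (Outputs opp (cimcic k) C))"
  using assms unfolding is_CIMCIC_def by simp

lemma CIMCIC_cooperation_reciprocated:
  assumes "sound run is_proof" and "is_CIMCIC run is_proof cimcic"
    and "run (cimcic k) opp = C"
  shows "run opp (cimcic k) = C"
proof -
  have "holds run (Imp (Outputs (cimcic k) opp C) (Outputs opp (cimcic k) C))"
    using holds_if_proof_search[OF assms(1)] CIMCIC_cooperates_iff[OF assms(2)] assms(3)
    by blast
  with assms(3) show ?thesis by simp
qed

theorem proposition3:
  fixes run :: interp and is_proof :: "string \<Rightarrow> fmla \<Rightarrow> bool"
    and cimcic :: "nat \<Rightarrow> source"
  assumes "sound run is_proof"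
    and "is_CIMCIC run is_proof cimcic"
  shows "\<forall>k opp. outcome run (cimcic k) opp \<noteq> (C, D)"
  using CIMCIC_cooperation_reciprocated[OF assms] by (auto simp: outcome_def)

end
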